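(* Let $\sigma$ be a pre-weight function and $\mathfrak{M}_\sigma=\{S^{(x)}:x>0\}$ its associated weight matrix. Then the strong dual of $\Lambda^{\{\mathfrak{M}_\sigma\}}$ is topologically isomorphic to \[ \mathcal{A}^0=\{f\in\mathcal{H}(\mathbb{C}):\ \forall n\in\mathbb{N}_{\ge1}\ \exists A>0\ \forall z\in\mathbb{C}:\ |f(z)|\le Ae^{\omega_{S^{(n)}}(|z|/n)}\}, \] equipped with the topology given by the seminorms $f\mapsto\sup_{z\in\mathbb{C}}|f(z)|e^{-\omega_{S^{(n)}}(|z|/n)}$, $n\in\mathbb{N}_{\ge1}$. The isomorphism is given by $T\mapsto\Phi(T)$, $\Phi(T)(z)=\sum_jT(e_j)z^j$, where $e_j$ is the $j$-th unit vector.
   Context: A pre-weight function is a continuous increasing $\sigma:[0,\infty)\to[0,\infty)$ with $\sigma(0)=0$, $\sigma(t)\to\infty$, $\log t=o(\sigma(t))$, $t\mapsto\sigma(e^t)$ convex. $\varphi^*_\sigma(x)=\sup_{y\ge0}(xy-\sigma(e^y))$, $S^{(x)}_j=\exp(\frac1x\varphi^*_\sigma(xj))$. For a positive sequence $M$, $\omega_M(t)=\sup_k\log(t^kM_0/M_k)$ ($t>0$), $\omega_M(0)=0$. $\Lambda^{\{\mathfrak{M}_\sigma\}}$ is the inductive limit over $k\in\mathbb{N}_{\ge1}$ of the Banach spaces $\Lambda^k=\{a\in\mathbb{C}^{\mathbb{N}}:\|a\|_k=\sup_j|a_j|/(k^jS^{(k)}_j)<\infty\}$. $\mathcal{H}(\mathbb{C})$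 denotes the entire functions. *)

theory Defs
  imports "HOL-Complex_Analysis.Complex_Analysis" "HOL-Library.Landau_Symbols"
begin

definition pre_weight :: "(real \<Rightarrow> real) \<Rightarrow> bool" where
  "pre_weight \<sigma> \<longleftrightarrow>
     continuous_on {0..} \<sigma> \<and> mono_on {0..} \<sigma> \<and> \<sigma> 0 = 0 \<and>
     (\<forall>t\<ge>0. \<sigma> t \<ge> 0) \<and> filterlim \<sigma> at_top at_top \<and>
     (\<lambda>t. ln t) \<in> o[at_top](\<sigma>) \<and> convex_on UNIV (\<lambda>t. \<sigma> (exp t))"

definition phi_star :: "(real \<Rightarrow> real) \<Rightarrow> real \<Rightarrow> real" where
  "phi_star \<sigma> x = (SUP y\<in>{0..}. x * y - \<sigma> (exp y))"

definition Sseq :: "(real \<Rightarrow> real) \<Rightarrow> real \<Rightarrow> nat \<Rightarrow> real" where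
  "Sseq \<sigma> x j = exp (phi_star \<sigma> (x * real j) / x)"

definition omega_M :: "(nat \<Rightarrow> real) \<Rightarrow> real \<Rightarrow> real" where
  "omega_M M t = (if t = 0 then 0 else (SUP k. ln (t ^ k * M 0 / M k)))"

definition step_ratio :: "(real \<Rightarrow> real) \<Rightarrow> nat \<Rightarrow> (nat \<Rightarrow> complex) \<Rightarrow> nat \<Rightarrow> real" where
  "step_ratio \<sigma> k a j = cmod (a j) / (real k ^ j * Sseq \<sigma> (real k) j)"

definition Lam_step :: "(real \<Rightarrow> real) \<Rightarrow> nat \<Rightarrow> (nat \<Rightarrow> complex) set" where
  "Lam_step \<sigma> k = {a. bdd_above (range (step_ratio \<sigma> k a))}"

definition Lam_norm :: "(real \<Rightarrow> real) \<Rightarrow> nat \<Rightarrow> (nat \<Rightarrow> complex) \<Rightarrow> real" where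
  "Lam_norm \<sigma> k a = (SUP j. step_ratio \<sigma> k a j)"

definition Lam :: "(real \<Rightarrow> real) \<Rightarrow> (nat \<Rightarrow> complex) set" where
  "Lam \<sigma> = (\<Union>k\<in>{1..}. Lam_step \<sigma> k)"

text \<open>Continuous seminorms for the locally convex inductive limit topology:
  seminorms on Lam whose restriction to every step Lam^k is continuous.
  These generate the inductive limit topology.\<close>
definition LB_cont_seminorm :: "(real \<Rightarrow> real) \<Rightarrow> ((nat \<Rightarrow> complex) \<Rightarrow> real) \<Rightarrow> bool" where
  "LB_cont_seminorm \<sigma> p \<longleftrightarrow>
     (\<forall>a\<in>Lam \<sigma>. \<forall>b\<in>Lam \<sigma>. p (\<lambda>i. a i + b i) \<le> p a + p b) \<and>
     (\<forall>a\<in>Lam \<sigma>. \<forall>c::complex. p (\<lambda>i. c * a i) = cmod c * p a) \<and>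
     (\<forall>k\<ge>1. \<exists>C. \<forall>a\<in>Lam_step \<sigma> k. p a \<le> C * Lam_norm \<sigma> k a)"

definition LB_bounded :: "(real \<Rightarrow> real) \<Rightarrow> (nat \<Rightarrow> complex) set \<Rightarrow> bool" where
  "LB_bounded \<sigma> B \<longleftrightarrow> B \<subseteq> Lam \<sigma> \<and>
     (\<forall>p. LB_cont_seminorm \<sigma> p \<longrightarrow> bdd_above (p ` B))"

definition LB_dual :: "(real \<Rightarrow> real) \<Rightarrow> ((nat \<Rightarrow> complex) \<Rightarrow> complex) set" where
  "LB_dual \<sigma> = {T.
     (\<forall>a\<in>Lam \<sigma>. \<forall>b\<in>Lam \<sigma>. T (\<lambda>i. a i + b i) = T a + T b) \<and>
     (\<forall>a\<in>Lam \<sigma>. \<forall>c. T (\<lambda>i. c * a i) = c * T a) \<and>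
     (\<forall>k\<ge>1. \<exists>C. \<forall>a\<in>Lam_step \<sigma> k. cmod (T a) \<le> C * Lam_norm \<sigma> k a) \<and>
     (\<forall>a. a \<notin> Lam \<sigma> \<longrightarrow> T a = 0)}"

text \<open>Seminorms of the strong dual topology: sup over a bounded set.\<close>
definition dual_seminorm :: "(nat \<Rightarrow> complex) set \<Rightarrow> ((nat \<Rightarrow> complex) \<Rightarrow> complex) \<Rightarrow> real" where
  "dual_seminorm B T = Sup (insert 0 ((\<lambda>a. cmod (T a)) ` B))"

definition A0 :: "(real \<Rightarrow> real) \<Rightarrow> (complex \<Rightarrow> complex) set" where
  "A0 \<sigma> = {f. f holomorphic_on UNIV \<and>
     (\<forall>n::nat\<ge>1. \<exists>A>0. \<forall>z. cmod (f z) \<le> A * exp (omega_M (Sseq \<sigma> (real n)) (cmod z / real n)))}"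

definition A0_seminorm :: "(real \<Rightarrow> real) \<Rightarrow> nat \<Rightarrow> (complex \<Rightarrow> complex) \<Rightarrow> real" where
  "A0_seminorm \<sigma> n f =
     (SUP z. cmod (f z) * exp (- omega_M (Sseq \<sigma> (real n)) (cmod z / real n)))"

definition sn_continuous ::
  "'x set \<Rightarrow> 'i set \<Rightarrow> ('i \<Rightarrow> 'x \<Rightarrow> real) \<Rightarrow> 'j set \<Rightarrow> ('j \<Rightarrow> 'y \<Rightarrow> real) \<Rightarrow> ('x \<Rightarrow> 'y) \<Rightarrow> bool" where
  "sn_continuous X I p J q f \<longleftrightarrow>
     (\<forall>j\<in>J. \<exists>F. F \<subseteq> I \<and> finite F \<and> (\<exists>C. \<forall>x\<in>X. q j (f x) \<le> C * (\<Sum>i\<in>F. p i x)))"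

definition unit_vec :: "nat \<Rightarrow> nat \<Rightarrow> complex" where
  "unit_vec j = (\<lambda>i. if i = j then 1 else 0)"

definition Phi :: "((nat \<Rightarrow> complex) \<Rightarrow> complex) \<Rightarrow> complex \<Rightarrow> complex" where
  "Phi T = (\<lambda>z. \<Sum>j. T (unit_vec j) * z ^ j)"

end

theory Submission
  imports Defs
begin

(* An element T of the dual is determined by its values c_j = T(e_j): every a in Lambda^k lies in
   Lambda^(2k), where its tails have norm O(2^-N) because (2k)^j S^(2k)_j >= 2^j k^j S^(k)_j, so
   T a = sum_j a_j c_j.  Continuity of T on every step says exactly that
   sup_j |c_j| k^j S^(k)_j < infinity for all k, and this coefficient condition also characterises
   the Taylor coefficients of the functions in A^0: one direction bounds sum_j c_j z^j termwise by
   exp(omega_S^(n)(|z|/n)), the other is Cauchy's inequality on a circle whose radius comes from the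
   supremum defining phi*.  For the topologies, the sets {k^j S^(k)_j e_j} are bounded, and
   conversely every bounded set is a bounded subset of a single step, since otherwise a diagonal
   seminorm would be unbounded on it. *)

section \<open>Pre-weight functions and the weights S^(x)\<close>

lemma pre_weight_nonneg: "pre_weight \<sigma> \<Longrightarrow> 0 \<le> t \<Longrightarrow> 0 \<le> \<sigma> t"
  unfolding pre_weight_def by blast

lemma pre_weight_superlinear:
  assumes pw: "pre_weight \<sigma>" and c: "c > 0"
  shows "\<exists>Y\<ge>0. \<forall>y\<ge>Y. y \<le> c * \<sigma> (exp y)"
proof -
  have "(\<lambda>t. ln t) \<in> o[at_top](\<sigma>)" using pw unfolding pre_weight_def by blast
  from landau_o.smallD[OF this c] obtain T where T: "\<And>t. t \<ge> T \<Longrightarrow> norm (ln t) \<le> c * norm (\<sigma> t)"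
    by (auto simp: eventually_at_top_linorder)
  show ?thesis
  proof (intro exI[of _ "max 0 (ln (max T 1))"] conjI allI impI)
    fix y assume y: "max 0 (ln (max T 1)) \<le> y"
    have "T \<le> exp y"
      using y by (metis exp_le_cancel_iff exp_ln max.bounded_iff max.cobounded1 zero_less_one
          less_max_iff_disj order_trans)
    then show "y \<le> c * \<sigma> (exp y)"
      using T[of "exp y"] pre_weight_nonneg[OF pw, of "exp y"] by simp
  qed simp
qed

lemma phi_star_bdd:
  assumes pw: "pre_weight \<sigma>"
  shows "bdd_above ((\<lambda>y. x * y - \<sigma> (exp y)) ` {0..})"
proof -
  have "0 < 1 / (\<bar>x\<bar> + 1)" by (simp add: add_pos_nonneg)
  then obtain Y where "Y \<ge> 0" and Y: "\<And>y. y \<ge> Y \<Longrightarrow> y \<le> (1 / (\<bar>x\<bar> + 1)) * \<sigma> (exp y)"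
    using pre_weight_superlinear[OF pw] by blast
  show ?thesis
  proof (rule bdd_aboveI2)
    fix y :: real assume "y \<in> {0..}"
    then have y: "0 \<le> y" and xy: "x * y \<le> \<bar>x\<bar> * y" by (auto intro: mult_right_mono)
    show "x * y - \<sigma> (exp y) \<le> \<bar>x\<bar> * Y"
    proof (cases "y \<ge> Y")
      case True
      then have "\<bar>x\<bar> * y + y \<le> \<sigma> (exp y)"
        using Y[OF True] by (simp add: field_simps)
      moreover have "0 \<le> \<bar>x\<bar> * Y" using \<open>Y \<ge> 0\<close> by simp
      ultimately show ?thesis using xy y by linarith
    next
      case False
      then have "\<bar>x\<bar> * y \<le> \<bar>x\<bar> * Y" by (intro mult_left_mono) auto
      then show ?thesis using xy pre_weight_nonneg[OF pw, of "exp y"] by simp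
    qed
  qed
qed

lemma phi_star_ge: "pre_weight \<sigma> \<Longrightarrow> 0 \<le> y \<Longrightarrow> x * y - \<sigma> (exp y) \<le> phi_star \<sigma> x"
  unfolding phi_star_def by (rule cSUP_upper) (auto intro: phi_star_bdd)

lemma phi_star_approx:
  "pre_weight \<sigma> \<Longrightarrow> 0 < e \<Longrightarrow> \<exists>y\<ge>0. phi_star \<sigma> x - e < x * y - \<sigma> (exp y)"
  unfolding phi_star_def
  using less_cSUP_iff[of "{0..}" "\<lambda>y. x * y - \<sigma> (exp y)" "(SUP y\<in>{0..}. x * y - \<sigma> (exp y)) - e"]
    phi_star_bdd[of \<sigma> x] by auto

lemma phi_star_le: "(\<And>y. 0 \<le> y \<Longrightarrow> x * y - \<sigma> (exp y) \<le> c) \<Longrightarrow> phi_star \<sigma> x \<le> c"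
  unfolding phi_star_def by (rule cSUP_least) auto

lemma phi_star_div_mono:
  assumes pw: "pre_weight \<sigma>" and "0 < m" "m \<le> k"
  shows "phi_star \<sigma> (m * s) / m \<le> phi_star \<sigma> (k * s) / k"
proof -
  have "phi_star \<sigma> (m * s) \<le> (m / k) * phi_star \<sigma> (k * s)"
  proof (rule phi_star_le)
    fix y :: real assume y: "0 \<le> y"
    have "(m / k) * \<sigma> (exp y) \<le> \<sigma> (exp y)"
      using assms pre_weight_nonneg[OF pw, of "exp y"] by (intro mult_left_le_one_le) auto
    then have "m * s * y - \<sigma> (exp y) \<le> (m / k) * (k * s * y - \<sigma> (exp y))"
      using assms by (simp add: algebra_simps)
    also have "\<dots> \<le> (m / k) * phi_star \<sigma> (k * s)"
      using phi_star_ge[OF pw y, of "k * s"] assms by (intro mult_left_mono) auto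
    finally show "m * s * y - \<sigma> (exp y) \<le> (m / k) * phi_star \<sigma> (k * s)" .
  qed
  then show ?thesis using assms by (simp add: field_simps)
qed

lemma Sseq_pos [simp]: "0 < Sseq \<sigma> x j"
  by (simp add: Sseq_def)

lemma Sseq_mono: "pre_weight \<sigma> \<Longrightarrow> 0 < m \<Longrightarrow> m \<le> k \<Longrightarrow> Sseq \<sigma> m j \<le> Sseq \<sigma> k j"
  unfolding Sseq_def using phi_star_div_mono[of \<sigma> m k "real j"] by simp

definition Lam_weight :: "(real \<Rightarrow> real) \<Rightarrow> nat \<Rightarrow> nat \<Rightarrow> real" where
  "Lam_weight \<sigma> k j = real k ^ j * Sseq \<sigma> (real k) j"

lemma Lam_weight_pos: "1 \<le> k \<Longrightarrow> 0 < Lam_weight \<sigma> k j"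
  unfolding Lam_weight_def by simp

lemma Lam_weight_nonneg: "0 \<le> Lam_weight \<sigma> k j"
  unfolding Lam_weight_def by (simp add: less_imp_le)

lemma Lam_weight_mono:
  "pre_weight \<sigma> \<Longrightarrow> 1 \<le> m \<Longrightarrow> m \<le> k \<Longrightarrow> Lam_weight \<sigma> m j \<le> Lam_weight \<sigma> k j"
  unfolding Lam_weight_def by (intro mult_mono power_mono Sseq_mono) (auto simp: less_imp_le)

lemma Lam_weight_le_double:
  assumes "pre_weight \<sigma>" "1 \<le> k"
  shows "Lam_weight \<sigma> k j \<le> (1/2) ^ j * Lam_weight \<sigma> (2 * k) j"
proof -
  have "Sseq \<sigma> (real k) j \<le> Sseq \<sigma> (real (2 * k)) j"
    using assms by (intro Sseq_mono) auto
  then have "real k ^ j * Sseq \<sigma> k j \<le> real k ^ j * Sseq \<sigma> (2 * k) j"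
    by (intro mult_left_mono) auto
  then show ?thesis
    unfolding Lam_weight_def by (simp add: power_mult_distrib power_one_over field_simps)
qed

lemma omega_M_Sseq_term_le:
  assumes pw: "pre_weight \<sigma>" and x: "0 < x" and t: "0 < t"
  shows "ln (t ^ k * Sseq \<sigma> x 0 / Sseq \<sigma> x k) \<le> ln (Sseq \<sigma> x 0) + \<sigma> (max t 1) / x"
proof -
  define s where "s = max t 1"
  have s: "1 \<le> s" "ln t \<le> ln s" using t by (auto simp: s_def)
  have "x * (k * ln s) - \<sigma> s \<le> phi_star \<sigma> (x * k)"
    using phi_star_ge[OF pw, of "ln s" "x * k"] s by (simp add: mult.assoc)
  then have "(x * (k * ln s) - \<sigma> s) / x \<le> phi_star \<sigma> (x * k) / x"
    using x by (intro divide_right_mono) auto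
  then have "k * ln s - \<sigma> s / x \<le> phi_star \<sigma> (x * k) / x"
    using x by (simp add: diff_divide_distrib)
  moreover have "k * ln t \<le> k * ln s" using s by (intro mult_left_mono) auto
  moreover have "ln (t ^ k * Sseq \<sigma> x 0 / Sseq \<sigma> x k)
      = k * ln t + ln (Sseq \<sigma> x 0) - phi_star \<sigma> (x * k) / x"
    using t by (simp add: ln_mult ln_div ln_realpow) (simp add: Sseq_def)
  ultimately show ?thesis unfolding s_def by linarith
qed

lemma exp_omega_M_Sseq_ge:
  assumes pw: "pre_weight \<sigma>" and x: "0 < x" and t: "0 \<le> t"
  shows "t ^ j * Sseq \<sigma> x 0 / Sseq \<sigma> x j \<le> exp (omega_M (Sseq \<sigma> x) t)"
proof (cases "t = 0")
  case True
  then show ?thesis by (cases j) (auto simp: omega_M_def)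
next
  case False
  with t have "0 < t" by simp
  have "bdd_above (range (\<lambda>k. ln (t ^ k * Sseq \<sigma> x 0 / Sseq \<sigma> x k)))"
    using omega_M_Sseq_term_le[OF pw x \<open>0 < t\<close>] by (intro bdd_aboveI2) blast
  then have "ln (t ^ j * Sseq \<sigma> x 0 / Sseq \<sigma> x j) \<le> omega_M (Sseq \<sigma> x) t"
    unfolding omega_M_def using False by (auto intro: cSUP_upper)
  then have "exp (ln (t ^ j * Sseq \<sigma> x 0 / Sseq \<sigma> x j)) \<le> exp (omega_M (Sseq \<sigma> x) t)"
    by simp
  then show ?thesis using \<open>0 < t\<close> by simp
qed

lemma omega_M_Sseq_le:
  assumes pw: "pre_weight \<sigma>" and x: "0 < x" and t: "1 \<le> t"
  shows "omega_M (Sseq \<sigma> x) t \<le> ln (Sseq \<sigma> x 0) + \<sigma> t / x"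
  unfolding omega_M_def using omega_M_Sseq_term_le[OF pw x, of t] t
  by simp (rule cSUP_least, auto simp: max_def)

section \<open>Entire functions of controlled growth\<close>

lemma geometric_dominated_suminf:
  fixes c :: "nat \<Rightarrow> 'a::banach"
  assumes c: "\<And>j. norm (c j) \<le> K * (1/2) ^ j"
  shows "summable c" and "norm (suminf c) \<le> 2 * K"
proof -
  have geom: "summable (\<lambda>j. K * (1/2::real) ^ j)"
    by (intro summable_mult summable_geometric) simp
  have norms: "summable (\<lambda>j. norm (c j))"
    by (rule summable_comparison_test[OF _ geom]) (use c in auto)
  then show "summable c" by (rule summable_norm_cancel)
  have "norm (suminf c) \<le> (\<Sum>j. norm (c j))" by (rule summable_norm[OF norms])
  also have "\<dots> \<le> (\<Sum>j. K * (1/2::real) ^ j)" by (rule suminf_le[OF c norms geom])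
  also have "\<dots> = 2 * K"
    using suminf_mult[OF summable_geometric[of "1/2::real"], of K] suminf_geometric[of "1/2::real"]
    by simp
  finally show "norm (suminf c) \<le> 2 * K" .
qed

definition taylor_coeff :: "(complex \<Rightarrow> complex) \<Rightarrow> nat \<Rightarrow> complex" where
  "taylor_coeff f j = (deriv ^^ j) f 0 / fact j"

lemma taylor_coeff_power_series:
  fixes c :: "nat \<Rightarrow> complex"
  assumes "\<And>z. summable (\<lambda>j. c j * z ^ j)"
  shows "taylor_coeff (\<lambda>z. \<Sum>j. c j * z ^ j) n = c n"
proof -
  have "(0::ereal) < 1" by simp
  also have "1 \<le> fps_conv_radius (Abs_fps c)"
    using conv_radius_geI[OF assms[of 1]] by (simp add: fps_conv_radius_def one_ereal_def)
  finally have "eval_fps (Abs_fps c) has_fps_expansion Abs_fps c"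
    by (rule eval_fps_has_fps_expansion)
  from fps_nth_fps_expansion[OF this, of n] show ?thesis
    by (simp add: taylor_coeff_def eval_fps_def[abs_def])
qed

lemma taylor_coeff_sums:
  "f holomorphic_on UNIV \<Longrightarrow> (\<lambda>j. taylor_coeff f j * z ^ j) sums f z"
  using holomorphic_power_series[of f 0 "norm z + 1" z]
  by (auto simp: taylor_coeff_def intro: holomorphic_on_subset)

lemma entire_power_series_holomorphic:
  fixes c :: "nat \<Rightarrow> complex"
  assumes "\<And>z. summable (\<lambda>j. c j * z ^ j)"
  shows "(\<lambda>z. \<Sum>j. c j * z ^ j) holomorphic_on UNIV"
proof -
  have "(\<lambda>z. \<Sum>j. c j * z ^ j) holomorphic_on (\<Union>r. ball 0 r)"
    by (intro holomorphic_on_UN_open power_series_holomorphic) (auto intro: summable_sums assms)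
  moreover have "(\<Union>r. ball (0::complex) r) = UNIV"
    by (auto intro: gt_ex)
  ultimately show ?thesis by simp
qed

lemma taylor_coeff_bound:
  assumes pw: "pre_weight \<sigma>" and n: "1 \<le> n" and hol: "f holomorphic_on UNIV"
    and bnd: "\<And>z. cmod (f z) \<le> A * exp (omega_M (Sseq \<sigma> (real n)) (cmod z / real n))"
  shows "cmod (taylor_coeff f j) * Lam_weight \<sigma> n j \<le> exp 1 * A * Sseq \<sigma> (real n) 0"
proof -
  have np: "0 < real n" using n by simp
  have "0 \<le> A * exp (omega_M (Sseq \<sigma> (real n)) (cmod 0 / real n))"
    using order_trans[OF norm_ge_zero bnd] .
  then have A: "0 \<le> A" by (simp add: zero_le_mult_iff)
  \<comment> \<open>Cauchy's estimate on the circle of radius n e^y, where y nearly attains the supremum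
      defining phi*(n j).\<close>
  obtain y :: real where y0: "0 \<le> y"
    and y: "phi_star \<sigma> (real n * j) - n < real n * j * y - \<sigma> (exp y)"
    using phi_star_approx[OF pw np] by blast
  define r where "r = n * exp y"
  define E where "E = exp (\<sigma> (exp y) / n)"
  define B where "B = A * Sseq \<sigma> n 0 * E"
  have circle: "norm (f z) \<le> B" if "norm (0 - z) = r" for z
  proof -
    have "cmod z / n = exp y" using that np by (simp add: r_def)
    then have "cmod (f z) \<le> A * exp (omega_M (Sseq \<sigma> n) (exp y))" using bnd[of z] by simp
    also have "\<dots> \<le> A * exp (ln (Sseq \<sigma> n 0) + \<sigma> (exp y) / n)"
      using omega_M_Sseq_le[OF pw np, of "exp y"] y0 A by (intro mult_left_mono) auto
    also have "\<dots> = B" by (simp add: B_def E_def exp_add)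
    finally show ?thesis by simp
  qed
  have "norm ((deriv ^^ j) f 0) \<le> fact j * B / r ^ j"
    using np by (intro Cauchy_inequality[OF _ _ _ circle])
      (auto simp: r_def intro: holomorphic_on_subset[OF hol] holomorphic_on_imp_continuous_on)
  then have coeff: "cmod (taylor_coeff f j) * r ^ j \<le> B"
    using np by (simp add: taylor_coeff_def norm_divide field_simps r_def)
  have "phi_star \<sigma> (real n * j) / n < j * y - \<sigma> (exp y) / n + 1"
    using y np by (simp add: field_simps)
  then have Sj: "Sseq \<sigma> n j * E \<le> exp 1 * exp (j * y)"
    by (simp add: Sseq_def E_def flip: exp_add)
  have "cmod (taylor_coeff f j) * Lam_weight \<sigma> n j * E
      = cmod (taylor_coeff f j) * n ^ j * (Sseq \<sigma> n j * E)"
    by (simp add: Lam_weight_def mult_ac)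
  also have "\<dots> \<le> cmod (taylor_coeff f j) * n ^ j * (exp 1 * exp (j * y))"
    by (intro mult_left_mono Sj) auto
  also have "\<dots> = exp 1 * (cmod (taylor_coeff f j) * r ^ j)"
    by (simp add: r_def power_mult_distrib exp_of_nat2_mult mult_ac)
  also have "\<dots> \<le> exp 1 * A * Sseq \<sigma> n 0 * E"
    using coeff by (simp add: B_def mult_ac)
  finally show ?thesis by (simp add: E_def)
qed

lemma power_series_omega_bound:
  fixes c :: "nat \<Rightarrow> complex"
  assumes pw: "pre_weight \<sigma>" and n: "1 \<le> n"
    and c: "\<And>j. cmod (c j) * Lam_weight \<sigma> (2 * n) j \<le> D"
  shows "summable (\<lambda>j. c j * z ^ j)"
    and "cmod (\<Sum>j. c j * z ^ j)
           \<le> 2 * D / Sseq \<sigma> (real n) 0 * exp (omega_M (Sseq \<sigma> (real n)) (cmod z / real n))"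
proof -
  define E where "E = exp (omega_M (Sseq \<sigma> (real n)) (cmod z / real n))"
  define S0 where "S0 = Sseq \<sigma> (real n) 0"
  have np: "0 < real n" using n by simp
  have "cmod (c j * z ^ j) \<le> E / S0 * D * (1/2) ^ j" for j
  proof -
    have "(cmod z / n) ^ j * S0 / Sseq \<sigma> n j \<le> E"
      unfolding E_def S0_def using exp_omega_M_Sseq_ge[OF pw np] by simp
    then have z: "cmod z ^ j \<le> E / S0 * Lam_weight \<sigma> n j"
      using np by (simp add: S0_def Lam_weight_def power_divide field_simps)
    have "cmod (c j) * Lam_weight \<sigma> n j \<le> (1/2) ^ j * (cmod (c j) * Lam_weight \<sigma> (2 * n) j)"
      using mult_left_mono[OF Lam_weight_le_double[OF pw n, of j] norm_ge_zero[of "c j"]]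
      by (simp add: mult_ac)
    also have "\<dots> \<le> (1/2) ^ j * D" by (intro mult_left_mono c) simp
    finally have cw: "cmod (c j) * Lam_weight \<sigma> n j \<le> D * (1/2) ^ j" by (simp add: mult.commute)
    have "cmod (c j * z ^ j) = cmod (c j) * cmod z ^ j" by (simp add: norm_mult norm_power)
    also have "\<dots> \<le> E / S0 * (cmod (c j) * Lam_weight \<sigma> n j)"
      using mult_left_mono[OF z norm_ge_zero[of "c j"]] by (simp add: mult_ac)
    also have "\<dots> \<le> E / S0 * (D * (1/2) ^ j)"
      by (rule mult_left_mono[OF cw]) (simp add: E_def S0_def less_imp_le)
    finally show ?thesis by (simp add: mult.assoc)
  qed
  from geometric_dominated_suminf[OF this]
  show "summable (\<lambda>j. c j * z ^ j)"
    and "cmod (\<Sum>j. c j * z ^ j) \<le> 2 * D / S0 * E"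
    by (simp_all add: mult_ac)
qed

definition Lam_dual_coeffs :: "(real \<Rightarrow> real) \<Rightarrow> (nat \<Rightarrow> complex) set" where
  "Lam_dual_coeffs \<sigma> = {c. \<forall>k\<ge>1. \<exists>D. \<forall>j. cmod (c j) * Lam_weight \<sigma> k j \<le> D}"

lemma Lam_dual_coeffs_summable:
  "pre_weight \<sigma> \<Longrightarrow> c \<in> Lam_dual_coeffs \<sigma> \<Longrightarrow> summable (\<lambda>j. c j * z ^ j)"
  unfolding Lam_dual_coeffs_def using power_series_omega_bound(1)[of \<sigma> 1 c] by force

lemma power_series_in_A0:
  assumes pw: "pre_weight \<sigma>" and c: "c \<in> Lam_dual_coeffs \<sigma>"
  shows "(\<lambda>z. \<Sum>j. c j * z ^ j) \<in> A0 \<sigma>"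
  unfolding A0_def
proof (intro CollectI conjI allI impI)
  show "(\<lambda>z. \<Sum>j. c j * z ^ j) holomorphic_on UNIV"
    by (rule entire_power_series_holomorphic[OF Lam_dual_coeffs_summable[OF pw c]])
  fix n :: nat assume n: "1 \<le> n"
  then obtain D where D: "\<And>j. cmod (c j) * Lam_weight \<sigma> (2 * n) j \<le> D"
    using c unfolding Lam_dual_coeffs_def by fastforce
  define A where "A = max (2 * D / Sseq \<sigma> (real n) 0) 1"
  show "\<exists>A>0. \<forall>z. cmod (\<Sum>j. c j * z ^ j) \<le> A * exp (omega_M (Sseq \<sigma> (real n)) (cmod z / real n))"
  proof (intro exI[of _ A] conjI allI)
    fix z
    show "cmod (\<Sum>j. c j * z ^ j) \<le> A * exp (omega_M (Sseq \<sigma> (real n)) (cmod z / real n))"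
      using power_series_omega_bound(2)[OF pw n D, of z]
      by (rule order_trans) (unfold A_def, intro mult_right_mono max.cobounded1 exp_ge_zero)
  qed (simp add: A_def)
qed

lemma A0_seminorm_power_series_le:
  fixes c :: "nat \<Rightarrow> complex"
  assumes pw: "pre_weight \<sigma>" and n: "1 \<le> n"
    and c: "\<And>j. cmod (c j) * Lam_weight \<sigma> (2 * n) j \<le> D"
  shows "A0_seminorm \<sigma> n (\<lambda>z. \<Sum>j. c j * z ^ j) \<le> 2 * D / Sseq \<sigma> (real n) 0"
  unfolding A0_seminorm_def
proof (rule cSUP_least)
  fix z
  define w where "w = omega_M (Sseq \<sigma> (real n)) (cmod z / real n)"
  have "cmod (\<Sum>j. c j * z ^ j) * exp (- w) \<le> 2 * D / Sseq \<sigma> (real n) 0 * exp w * exp (- w)"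
    using power_series_omega_bound(2)[OF pw n c, of z] by (intro mult_right_mono) (auto simp: w_def)
  then show "cmod (\<Sum>j. c j * z ^ j) * exp (- w) \<le> 2 * D / Sseq \<sigma> (real n) 0"
    by (simp add: mult.assoc flip: exp_add)
qed simp

lemma A0_weighted_bdd:
  assumes "f \<in> A0 \<sigma>" "1 \<le> n"
  shows "bdd_above (range (\<lambda>z. cmod (f z) * exp (- omega_M (Sseq \<sigma> (real n)) (cmod z / real n))))"
proof -
  obtain A where A: "\<And>z. cmod (f z) \<le> A * exp (omega_M (Sseq \<sigma> (real n)) (cmod z / real n))"
    using assms unfolding A0_def by blast
  show ?thesis
  proof (rule bdd_aboveI2)
    fix z
    have "cmod (f z) * exp (- omega_M (Sseq \<sigma> (real n)) (cmod z / real n))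
        \<le> A * exp (omega_M (Sseq \<sigma> (real n)) (cmod z / real n))
            * exp (- omega_M (Sseq \<sigma> (real n)) (cmod z / real n))"
      by (intro mult_right_mono A) simp
    then show "cmod (f z) * exp (- omega_M (Sseq \<sigma> (real n)) (cmod z / real n)) \<le> A"
      by (simp add: mult.assoc flip: exp_add)
  qed
qed

lemma A0_le_seminorm:
  assumes "f \<in> A0 \<sigma>" "1 \<le> n"
  shows "cmod (f z) \<le> A0_seminorm \<sigma> n f * exp (omega_M (Sseq \<sigma> (real n)) (cmod z / real n))"
proof -
  have "cmod (f z) * exp (- omega_M (Sseq \<sigma> (real n)) (cmod z / real n)) \<le> A0_seminorm \<sigma> n f"
    unfolding A0_seminorm_def by (rule cSUP_upper[OF _ A0_weighted_bdd[OF assms]]) simp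
  then have "cmod (f z) * exp (- omega_M (Sseq \<sigma> (real n)) (cmod z / real n))
      * exp (omega_M (Sseq \<sigma> (real n)) (cmod z / real n))
      \<le> A0_seminorm \<sigma> n f * exp (omega_M (Sseq \<sigma> (real n)) (cmod z / real n))"
    by (intro mult_right_mono) auto
  then show ?thesis by (simp add: mult.assoc flip: exp_add)
qed

lemma A0_seminorm_nonneg: "f \<in> A0 \<sigma> \<Longrightarrow> 1 \<le> n \<Longrightarrow> 0 \<le> A0_seminorm \<sigma> n f"
  unfolding A0_seminorm_def
  by (rule order_trans[OF _ cSUP_upper[OF _ A0_weighted_bdd, of 0]]) auto

lemma taylor_coeff_A0_bound:
  assumes pw: "pre_weight \<sigma>" and f: "f \<in> A0 \<sigma>" and n: "1 \<le> n"
  shows "cmod (taylor_coeff f j) * Lam_weight \<sigma> n j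
           \<le> exp 1 * A0_seminorm \<sigma> n f * Sseq \<sigma> (real n) 0"
  using f by (intro taylor_coeff_bound[OF pw n] A0_le_seminorm[OF f n]) (simp add: A0_def)

lemma taylor_coeff_in_Lam_dual_coeffs:
  "pre_weight \<sigma> \<Longrightarrow> f \<in> A0 \<sigma> \<Longrightarrow> taylor_coeff f \<in> Lam_dual_coeffs \<sigma>"
  unfolding Lam_dual_coeffs_def using taylor_coeff_A0_bound by blast

section \<open>The step spaces\<close>

lemma step_ratio_eq: "step_ratio \<sigma> k a j = cmod (a j) / Lam_weight \<sigma> k j"
  by (simp add: step_ratio_def Lam_weight_def)

lemma step_ratio_nonneg: "0 \<le> step_ratio \<sigma> k a j"
  by (simp add: step_ratio_eq Lam_weight_nonneg)

lemma Lam_stepI: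
  assumes "1 \<le> k" "\<And>j. cmod (a j) \<le> L * Lam_weight \<sigma> k j"
  shows "a \<in> Lam_step \<sigma> k"
  unfolding Lam_step_def
proof (intro CollectI bdd_aboveI2)
  fix j
  show "step_ratio \<sigma> k a j \<le> L"
    using assms Lam_weight_pos[OF assms(1), of \<sigma> j] by (simp add: step_ratio_eq divide_le_eq)
qed

lemma step_ratio_le_Lam_norm: "a \<in> Lam_step \<sigma> k \<Longrightarrow> step_ratio \<sigma> k a j \<le> Lam_norm \<sigma> k a"
  unfolding Lam_step_def Lam_norm_def by (auto intro: cSUP_upper)

lemma Lam_norm_le: "(\<And>j. step_ratio \<sigma> k a j \<le> c) \<Longrightarrow> Lam_norm \<sigma> k a \<le> c"
  unfolding Lam_norm_def by (rule cSUP_least) auto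

lemma Lam_norm_nonneg: "a \<in> Lam_step \<sigma> k \<Longrightarrow> 0 \<le> Lam_norm \<sigma> k a"
  using step_ratio_le_Lam_norm step_ratio_nonneg order_trans by blast

lemma Lam_step_coord_le:
  assumes "1 \<le> k" "a \<in> Lam_step \<sigma> k"
  shows "cmod (a j) \<le> Lam_norm \<sigma> k a * Lam_weight \<sigma> k j"
  using step_ratio_le_Lam_norm[OF assms(2), of j] Lam_weight_pos[OF assms(1), of \<sigma> j]
  by (simp add: step_ratio_eq divide_le_eq)

lemma mem_Lam_iff: "a \<in> Lam \<sigma> \<longleftrightarrow> (\<exists>k\<ge>1. a \<in> Lam_step \<sigma> k)"
  unfolding Lam_def by auto

lemma Lam_step_mono:
  assumes pw: "pre_weight \<sigma>" and "1 \<le> k" "k \<le> m" and a: "a \<in> Lam_step \<sigma> k"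
  shows "a \<in> Lam_step \<sigma> m"
proof (rule Lam_stepI)
  show "1 \<le> m" using assms by simp
  fix j
  have "cmod (a j) \<le> Lam_norm \<sigma> k a * Lam_weight \<sigma> k j"
    by (rule Lam_step_coord_le[OF \<open>1 \<le> k\<close> a])
  also have "\<dots> \<le> Lam_norm \<sigma> k a * Lam_weight \<sigma> m j"
    using assms by (intro mult_left_mono Lam_weight_mono Lam_norm_nonneg) auto
  finally show "cmod (a j) \<le> Lam_norm \<sigma> k a * Lam_weight \<sigma> m j" .
qed

lemma Lam_add:
  assumes pw: "pre_weight \<sigma>" and "a \<in> Lam \<sigma>" "b \<in> Lam \<sigma>"
  shows "(\<lambda>i. a i + b i) \<in> Lam \<sigma>"
proof -
  obtain k m where km: "1 \<le> k" "a \<in> Lam_step \<sigma> k" "1 \<le> m" "b \<in> Lam_step \<sigma> m"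
    using assms by (auto simp: mem_Lam_iff)
  define p where "p = max k m"
  have p: "1 \<le> p" "a \<in> Lam_step \<sigma> p" "b \<in> Lam_step \<sigma> p"
    using km Lam_step_mono[OF pw] by (auto simp: p_def)
  have "(\<lambda>i. a i + b i) \<in> Lam_step \<sigma> p"
  proof (rule Lam_stepI[OF p(1)])
    fix j
    have "cmod (a j + b j) \<le> cmod (a j) + cmod (b j)" by (rule norm_triangle_ineq)
    also have "\<dots> \<le> (Lam_norm \<sigma> p a + Lam_norm \<sigma> p b) * Lam_weight \<sigma> p j"
      using Lam_step_coord_le[OF p(1)] p by (simp add: distrib_right add_mono)
    finally show "cmod (a j + b j) \<le> (Lam_norm \<sigma> p a + Lam_norm \<sigma> p b) * Lam_weight \<sigma> p j" .
  qed
  then show ?thesis using p(1) by (auto simp: mem_Lam_iff)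
qed

lemma Lam_step_scale:
  assumes k: "1 \<le> k" and a: "a \<in> Lam_step \<sigma> k"
  shows "(\<lambda>i. c * a i) \<in> Lam_step \<sigma> k"
proof (rule Lam_stepI[OF k])
  fix j
  show "cmod (c * a j) \<le> cmod c * Lam_norm \<sigma> k a * Lam_weight \<sigma> k j"
    using mult_left_mono[OF Lam_step_coord_le[OF k a, of j] norm_ge_zero[of c]]
    by (simp add: norm_mult mult.assoc)
qed

lemma Lam_scale: "a \<in> Lam \<sigma> \<Longrightarrow> (\<lambda>i. c * a i) \<in> Lam \<sigma>"
  using Lam_step_scale by (auto simp: mem_Lam_iff)

lemma Lam_step_finite_support:
  assumes k: "1 \<le> k" and fin: "\<And>j. N \<le> j \<Longrightarrow> a j = 0"
  shows "a \<in> Lam_step \<sigma> k"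
proof (rule Lam_stepI[OF k, where L = "\<Sum>i<N. step_ratio \<sigma> k a i"])
  fix j
  have "step_ratio \<sigma> k a j \<le> (\<Sum>i<N. step_ratio \<sigma> k a i)"
  proof (cases "j < N")
    case True
    then show ?thesis by (intro member_le_sum step_ratio_nonneg) auto
  next
    case False
    then have "step_ratio \<sigma> k a j = 0" by (simp add: step_ratio_eq fin)
    moreover have "0 \<le> (\<Sum>i<N. step_ratio \<sigma> k a i)" by (intro sum_nonneg step_ratio_nonneg)
    ultimately show ?thesis by simp
  qed
  then show "cmod (a j) \<le> (\<Sum>i<N. step_ratio \<sigma> k a i) * Lam_weight \<sigma> k j"
    using Lam_weight_pos[OF k, of \<sigma> j] by (simp add: step_ratio_eq divide_le_eq)
qed

lemma Lam_finite_support: "(\<And>j. N \<le> j \<Longrightarrow> a j = 0) \<Longrightarrow> a \<in> Lam \<sigma>"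
  using Lam_step_finite_support[of 1 N a \<sigma>] by (auto simp: mem_Lam_iff)

lemma unit_vec_Lam_step: "1 \<le> k \<Longrightarrow> unit_vec j \<in> Lam_step \<sigma> k"
  by (rule Lam_step_finite_support[of k "Suc j"]) (auto simp: unit_vec_def)

lemma unit_vec_Lam: "unit_vec j \<in> Lam \<sigma>"
  by (rule Lam_finite_support[of "Suc j"]) (auto simp: unit_vec_def)

lemma Lam_norm_le_coord:
  assumes "1 \<le> k" "\<And>j. cmod (a j) \<le> L * Lam_weight \<sigma> k j"
  shows "Lam_norm \<sigma> k a \<le> L"
  using assms Lam_weight_pos[OF assms(1)] by (intro Lam_norm_le) (simp add: step_ratio_eq divide_le_eq)

lemma Lam_norm_weighted_unit_vec:
  "1 \<le> k \<Longrightarrow> Lam_norm \<sigma> k (\<lambda>i. complex_of_real (Lam_weight \<sigma> k j) * unit_vec j i) \<le> 1"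
  by (rule Lam_norm_le_coord) (auto simp: unit_vec_def norm_mult Lam_weight_nonneg)

lemma Lam_tail_bound:
  fixes N :: nat
  assumes pw: "pre_weight \<sigma>" and k: "1 \<le> k" and a: "a \<in> Lam_step \<sigma> k"
  defines "tail \<equiv> \<lambda>i. if i < N then 0 else a i"
  shows "tail \<in> Lam_step \<sigma> (2 * k)" and "Lam_norm \<sigma> (2 * k) tail \<le> Lam_norm \<sigma> k a * (1/2) ^ N"
proof -
  have k2: "1 \<le> 2 * k" using k by simp
  have L: "0 \<le> Lam_norm \<sigma> k a" by (rule Lam_norm_nonneg[OF a])
  have "cmod (tail j) \<le> Lam_norm \<sigma> k a * (1/2) ^ N * Lam_weight \<sigma> (2 * k) j" for j
  proof (cases "j < N")
    case True
    then show ?thesis using L by (simp add: tail_def Lam_weight_nonneg)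
  next
    case False
    have "cmod (a j) \<le> Lam_norm \<sigma> k a * Lam_weight \<sigma> k j" by (rule Lam_step_coord_le[OF k a])
    also have "\<dots> \<le> Lam_norm \<sigma> k a * ((1/2) ^ j * Lam_weight \<sigma> (2 * k) j)"
      by (intro mult_left_mono L Lam_weight_le_double[OF pw k])
    also have "\<dots> \<le> Lam_norm \<sigma> k a * ((1/2) ^ N * Lam_weight \<sigma> (2 * k) j)"
      using False by (intro mult_left_mono L mult_right_mono power_decreasing Lam_weight_nonneg) auto
    finally show ?thesis using False by (simp add: tail_def mult.assoc)
  qed
  then show "tail \<in> Lam_step \<sigma> (2 * k)" and "Lam_norm \<sigma> (2 * k) tail \<le> Lam_norm \<sigma> k a * (1/2) ^ N"
    by (auto intro: Lam_stepI[OF k2] Lam_norm_le_coord[OF k2])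
qed

section \<open>The dual as a sequence space\<close>

lemma LB_dual_add: "T \<in> LB_dual \<sigma> \<Longrightarrow> a \<in> Lam \<sigma> \<Longrightarrow> b \<in> Lam \<sigma> \<Longrightarrow> T (\<lambda>i. a i + b i) = T a + T b"
  unfolding LB_dual_def by blast

lemma LB_dual_scale: "T \<in> LB_dual \<sigma> \<Longrightarrow> a \<in> Lam \<sigma> \<Longrightarrow> T (\<lambda>i. c * a i) = c * T a"
  unfolding LB_dual_def by blast

lemma LB_dual_outside: "T \<in> LB_dual \<sigma> \<Longrightarrow> a \<notin> Lam \<sigma> \<Longrightarrow> T a = 0"
  unfolding LB_dual_def by blast

lemma LB_dual_bound:
  assumes "T \<in> LB_dual \<sigma>" "1 \<le> k"
  obtains C where "0 \<le> C" "\<And>a. a \<in> Lam_step \<sigma> k \<Longrightarrow> cmod (T a) \<le> C * Lam_norm \<sigma> k a"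
proof -
  obtain C where C: "\<forall>a\<in>Lam_step \<sigma> k. cmod (T a) \<le> C * Lam_norm \<sigma> k a"
    using assms unfolding LB_dual_def by blast
  show ?thesis
  proof (rule that[of "max C 0"])
    fix a assume a: "a \<in> Lam_step \<sigma> k"
    have "C * Lam_norm \<sigma> k a \<le> max C 0 * Lam_norm \<sigma> k a"
      by (intro mult_right_mono Lam_norm_nonneg[OF a]) simp
    then show "cmod (T a) \<le> max C 0 * Lam_norm \<sigma> k a" using C a by fastforce
  qed simp
qed

lemma LB_dual_cont_seminorm:
  assumes T: "T \<in> LB_dual \<sigma>"
  shows "LB_cont_seminorm \<sigma> (\<lambda>a. cmod (T a))"
  unfolding LB_cont_seminorm_def
proof (intro conjI ballI allI impI)
  fix a b assume "a \<in> Lam \<sigma>" "b \<in> Lam \<sigma>"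
  then show "cmod (T (\<lambda>i. a i + b i)) \<le> cmod (T a) + cmod (T b)"
    by (simp add: LB_dual_add[OF T] norm_triangle_ineq)
next
  fix a c assume "a \<in> Lam \<sigma>"
  then show "cmod (T (\<lambda>i. c * a i)) = cmod c * cmod (T a)"
    by (simp add: LB_dual_scale[OF T] norm_mult)
next
  fix k :: nat assume "1 \<le> k"
  then show "\<exists>C. \<forall>a\<in>Lam_step \<sigma> k. cmod (T a) \<le> C * Lam_norm \<sigma> k a"
    using LB_dual_bound[OF T] by metis
qed

lemma LB_dual_coeffs:
  assumes T: "T \<in> LB_dual \<sigma>"
  shows "(\<lambda>j. T (unit_vec j)) \<in> Lam_dual_coeffs \<sigma>"
  unfolding Lam_dual_coeffs_def
proof (intro CollectI allI impI)
  fix k :: nat assume k: "1 \<le> k"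
  obtain C where C: "0 \<le> C" "\<And>a. a \<in> Lam_step \<sigma> k \<Longrightarrow> cmod (T a) \<le> C * Lam_norm \<sigma> k a"
    using LB_dual_bound[OF T k] by blast
  have "cmod (T (unit_vec j)) * Lam_weight \<sigma> k j \<le> C" for j
  proof -
    let ?b = "\<lambda>i. complex_of_real (Lam_weight \<sigma> k j) * unit_vec j i"
    have "cmod (T (unit_vec j)) * Lam_weight \<sigma> k j = cmod (T ?b)"
      by (simp add: LB_dual_scale[OF T unit_vec_Lam] norm_mult Lam_weight_nonneg)
    also have "\<dots> \<le> C * Lam_norm \<sigma> k ?b"
      by (intro C(2) Lam_step_scale unit_vec_Lam_step k)
    also have "\<dots> \<le> C" using mult_left_mono[OF Lam_norm_weighted_unit_vec[OF k] C(1)] by simp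
    finally show ?thesis .
  qed
  then show "\<exists>D. \<forall>j. cmod (T (unit_vec j)) * Lam_weight \<sigma> k j \<le> D" by blast
qed

lemma LB_dual_truncation:
  assumes T: "T \<in> LB_dual \<sigma>"
  shows "T (\<lambda>i. if i < N then a i else 0) = (\<Sum>j<N. a j * T (unit_vec j))"
proof (induction N)
  case 0
  show ?case using LB_dual_scale[OF T unit_vec_Lam, of 0 0] by simp
next
  case (Suc N)
  have "(\<lambda>i. if i < Suc N then a i else 0) = (\<lambda>i. (if i < N then a i else 0) + a N * unit_vec N i)"
    by (rule ext) (auto simp: unit_vec_def less_Suc_eq)
  moreover have "(\<lambda>i. if i < N then a i else 0) \<in> Lam \<sigma>" by (rule Lam_finite_support[of N]) simp
  ultimately show ?case
    using Suc LB_dual_add[OF T] LB_dual_scale[OF T unit_vec_Lam] Lam_scale[OF unit_vec_Lam] by simp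
qed

lemma LB_dual_sums:
  assumes pw: "pre_weight \<sigma>" and T: "T \<in> LB_dual \<sigma>" and a: "a \<in> Lam \<sigma>"
  shows "(\<lambda>j. a j * T (unit_vec j)) sums T a"
proof -
  obtain k where k: "1 \<le> k" "a \<in> Lam_step \<sigma> k" using a by (auto simp: mem_Lam_iff)
  obtain C where C: "0 \<le> C" "\<And>b. b \<in> Lam_step \<sigma> (2 * k) \<Longrightarrow> cmod (T b) \<le> C * Lam_norm \<sigma> (2 * k) b"
    using LB_dual_bound[OF T, of "2 * k"] k by auto
  define tail where "tail N = (\<lambda>i. if i < N then 0 else a i)" for N
  have tail_step: "tail N \<in> Lam_step \<sigma> (2 * k)" for N
    using Lam_tail_bound(1)[OF pw k] by (simp add: tail_def)
  then have tail: "tail N \<in> Lam \<sigma>" for N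
    unfolding mem_Lam_iff using k(1) by (intro exI[of _ "2 * k"]) simp
  have split: "T a = (\<Sum>j<N. a j * T (unit_vec j)) + T (tail N)" for N
  proof -
    have "T a = T (\<lambda>i. (if i < N then a i else 0) + tail N i)"
      by (rule arg_cong[where f = T]) (simp add: tail_def fun_eq_iff)
    also have "\<dots> = T (\<lambda>i. if i < N then a i else 0) + T (tail N)"
      by (rule LB_dual_add[OF T Lam_finite_support[of N] tail]) simp
    finally show ?thesis by (simp add: LB_dual_truncation[OF T])
  qed
  have bound: "norm ((\<Sum>j<N. a j * T (unit_vec j)) - T a) \<le> C * (Lam_norm \<sigma> k a * (1/2) ^ N)" for N
  proof -
    have "norm ((\<Sum>j<N. a j * T (unit_vec j)) - T a) = cmod (T (tail N))"
      using split[of N] by (simp add: norm_minus_commute)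
    also have "\<dots> \<le> C * Lam_norm \<sigma> (2 * k) (tail N)"
      by (rule C(2)[OF tail_step])
    also have "\<dots> \<le> C * (Lam_norm \<sigma> k a * (1/2) ^ N)"
      using Lam_tail_bound(2)[OF pw k] by (intro mult_left_mono C(1)) (simp add: tail_def)
    finally show ?thesis .
  qed
  have lim: "(\<lambda>N. C * (Lam_norm \<sigma> k a * (1/2::real) ^ N)) \<longlonglongrightarrow> 0"
    by (intro tendsto_mult_right_zero LIMSEQ_power_zero) auto
  have "(\<lambda>N. (\<Sum>j<N. a j * T (unit_vec j)) - T a) \<longlonglongrightarrow> 0"
    by (rule Lim_null_comparison[OF always_eventually lim]) (use bound in blast)
  then show ?thesis unfolding sums_def by (rule LIM_zero_cancel)
qed

definition seq_functional :: "(real \<Rightarrow> real) \<Rightarrow> (nat \<Rightarrow> complex) \<Rightarrow> (nat \<Rightarrow> complex) \<Rightarrow> complex" where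
  "seq_functional \<sigma> c a = (if a \<in> Lam \<sigma> then \<Sum>j. a j * c j else 0)"

lemma Lam_pairing_bound:
  fixes a c :: "nat \<Rightarrow> complex"
  assumes pw: "pre_weight \<sigma>" and k: "1 \<le> k"
    and a: "\<And>j. cmod (a j) \<le> L * Lam_weight \<sigma> k j"
    and c: "\<And>j. cmod (c j) * Lam_weight \<sigma> (2 * k) j \<le> D"
  shows "summable (\<lambda>j. a j * c j)" and "cmod (\<Sum>j. a j * c j) \<le> 2 * (L * D)"
proof -
  have L: "0 \<le> L"
    using order_trans[OF norm_ge_zero a[of 0]] Lam_weight_pos[OF k, of \<sigma> 0]
    by (simp add: zero_le_mult_iff)
  have "cmod (a j * c j) \<le> L * D * (1/2) ^ j" for j
  proof -
    have "cmod (a j * c j) \<le> L * Lam_weight \<sigma> k j * cmod (c j)"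
      using mult_right_mono[OF a[of j] norm_ge_zero[of "c j"]] by (simp add: norm_mult)
    also have "\<dots> \<le> L * ((1/2) ^ j * Lam_weight \<sigma> (2 * k) j) * cmod (c j)"
      by (intro mult_right_mono mult_left_mono L Lam_weight_le_double[OF pw k] norm_ge_zero)
    also have "\<dots> = (L * (1/2) ^ j) * (cmod (c j) * Lam_weight \<sigma> (2 * k) j)"
      by (simp add: mult_ac)
    also have "\<dots> \<le> (L * (1/2) ^ j) * D" by (intro mult_left_mono c) (simp add: L)
    finally show ?thesis by (simp add: mult_ac)
  qed
  from geometric_dominated_suminf[OF this]
  show "summable (\<lambda>j. a j * c j)" and "cmod (\<Sum>j. a j * c j) \<le> 2 * (L * D)" by simp_all
qed

lemma seq_functional_summable:
  assumes pw: "pre_weight \<sigma>" and c: "c \<in> Lam_dual_coeffs \<sigma>" and a: "a \<in> Lam \<sigma>"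
  shows "summable (\<lambda>j. a j * c j)"
proof -
  obtain k where k: "1 \<le> k" "a \<in> Lam_step \<sigma> k" using a by (auto simp: mem_Lam_iff)
  obtain D where "\<And>j. cmod (c j) * Lam_weight \<sigma> (2 * k) j \<le> D"
    using c k(1) unfolding Lam_dual_coeffs_def by fastforce
  from Lam_pairing_bound(1)[OF pw k(1) Lam_step_coord_le[OF k] this] show ?thesis .
qed

lemma seq_functional_LB_dual:
  assumes pw: "pre_weight \<sigma>" and c: "c \<in> Lam_dual_coeffs \<sigma>"
  shows "seq_functional \<sigma> c \<in> LB_dual \<sigma>"
  unfolding LB_dual_def
proof (intro CollectI conjI ballI allI impI)
  fix a b assume a: "a \<in> Lam \<sigma>" and b: "b \<in> Lam \<sigma>"
  show "seq_functional \<sigma> c (\<lambda>i. a i + b i) = seq_functional \<sigma> c a + seq_functional \<sigma> c b"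
    using a b Lam_add[OF pw a b]
      suminf_add[OF seq_functional_summable[OF pw c a] seq_functional_summable[OF pw c b]]
    by (simp add: seq_functional_def distrib_right)
next
  fix a d assume a: "a \<in> Lam \<sigma>"
  show "seq_functional \<sigma> c (\<lambda>i. d * a i) = d * seq_functional \<sigma> c a"
    using a Lam_scale[OF a] suminf_mult[OF seq_functional_summable[OF pw c a], of d]
    by (simp add: seq_functional_def mult.assoc)
next
  fix k :: nat assume k: "1 \<le> k"
  then obtain D where D: "\<And>j. cmod (c j) * Lam_weight \<sigma> (2 * k) j \<le> D"
    using c unfolding Lam_dual_coeffs_def by fastforce
  have "cmod (seq_functional \<sigma> c a) \<le> (2 * D) * Lam_norm \<sigma> k a" if a: "a \<in> Lam_step \<sigma> k" for a
    using Lam_pairing_bound(2)[OF pw k Lam_step_coord_le[OF k a] D] a k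
    by (auto simp: seq_functional_def mem_Lam_iff mult_ac)
  then show "\<exists>C. \<forall>a\<in>Lam_step \<sigma> k. cmod (seq_functional \<sigma> c a) \<le> C * Lam_norm \<sigma> k a" by blast
next
  fix a assume "a \<notin> Lam \<sigma>"
  then show "seq_functional \<sigma> c a = 0" by (simp add: seq_functional_def)
qed

lemma seq_functional_unit_vec: "seq_functional \<sigma> c (unit_vec j) = c j"
proof -
  have "(\<lambda>i. unit_vec j i * c i) = (\<lambda>i. if i = j then c j else 0)"
    by (auto simp: unit_vec_def)
  then show ?thesis
    using sums_single[of j "\<lambda>_. c j"] unit_vec_Lam[of j \<sigma>] by (simp add: seq_functional_def sums_iff)
qed

lemma seq_functional_LB_dual_coeffs:
  assumes pw: "pre_weight \<sigma>" and T: "T \<in> LB_dual \<sigma>"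
  shows "seq_functional \<sigma> (\<lambda>j. T (unit_vec j)) = T"
proof
  fix a
  show "seq_functional \<sigma> (\<lambda>j. T (unit_vec j)) a = T a"
    using LB_dual_sums[OF pw T] LB_dual_outside[OF T] by (simp add: seq_functional_def sums_iff)
qed

section \<open>The map Phi\<close>

lemma Phi_in_A0: "pre_weight \<sigma> \<Longrightarrow> T \<in> LB_dual \<sigma> \<Longrightarrow> Phi T \<in> A0 \<sigma>"
  unfolding Phi_def by (rule power_series_in_A0[OF _ LB_dual_coeffs])

lemma taylor_coeff_Phi:
  assumes pw: "pre_weight \<sigma>" and T: "T \<in> LB_dual \<sigma>"
  shows "taylor_coeff (Phi T) = (\<lambda>j. T (unit_vec j))"
  unfolding Phi_def
  by (intro ext taylor_coeff_power_series Lam_dual_coeffs_summable[OF pw LB_dual_coeffs[OF T]])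

lemma Phi_seq_functional_taylor_coeff:
  assumes "f \<in> A0 \<sigma>"
  shows "Phi (seq_functional \<sigma> (taylor_coeff f)) = f"
proof
  fix z
  have "(\<lambda>j. taylor_coeff f j * z ^ j) sums f z"
    using assms by (intro taylor_coeff_sums) (simp add: A0_def)
  then show "Phi (seq_functional \<sigma> (taylor_coeff f)) z = f z"
    by (simp add: Phi_def seq_functional_unit_vec sums_iff)
qed

lemma Phi_bij: "pre_weight \<sigma> \<Longrightarrow> bij_betw Phi (LB_dual \<sigma>) (A0 \<sigma>)"
  by (rule bij_betw_byWitness[where f' = "\<lambda>f. seq_functional \<sigma> (taylor_coeff f)"])
    (auto simp: taylor_coeff_Phi seq_functional_LB_dual_coeffs Phi_seq_functional_taylor_coeff
      intro: Phi_in_A0 seq_functional_LB_dual taylor_coeff_in_Lam_dual_coeffs)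

lemma inv_into_Phi:
  "pre_weight \<sigma> \<Longrightarrow> f \<in> A0 \<sigma> \<Longrightarrow> inv_into (LB_dual \<sigma>) Phi f = seq_functional \<sigma> (taylor_coeff f)"
  by (intro inv_into_f_eq bij_betw_imp_inj_on[OF Phi_bij] seq_functional_LB_dual
      taylor_coeff_in_Lam_dual_coeffs Phi_seq_functional_taylor_coeff)

lemma Phi_add:
  assumes pw: "pre_weight \<sigma>" and T1: "T1 \<in> LB_dual \<sigma>" and T2: "T2 \<in> LB_dual \<sigma>"
  shows "Phi (\<lambda>a. T1 a + T2 a) = (\<lambda>z. Phi T1 z + Phi T2 z)"
proof
  fix z
  show "Phi (\<lambda>a. T1 a + T2 a) z = Phi T1 z + Phi T2 z"
    using suminf_add[OF Lam_dual_coeffs_summable[OF pw LB_dual_coeffs[OF T1], of z]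
        Lam_dual_coeffs_summable[OF pw LB_dual_coeffs[OF T2], of z]]
    by (simp add: Phi_def distrib_right)
qed

lemma Phi_scale:
  assumes pw: "pre_weight \<sigma>" and T: "T \<in> LB_dual \<sigma>"
  shows "Phi (\<lambda>a. c * T a) = (\<lambda>z. c * Phi T z)"
proof
  fix z
  show "Phi (\<lambda>a. c * T a) z = c * Phi T z"
    using suminf_mult[OF Lam_dual_coeffs_summable[OF pw LB_dual_coeffs[OF T], of z], of c]
    by (simp add: Phi_def mult.assoc)
qed

section \<open>Bounded sets and continuity\<close>

lemma cSUP_mult_left_real:
  fixes g :: "'a \<Rightarrow> real"
  assumes "0 \<le> c" "I \<noteq> {}" "bdd_above (g ` I)"
  shows "(SUP i\<in>I. c * g i) = c * (SUP i\<in>I. g i)"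
proof -
  have "c * Sup (g ` I) = Sup ((*) c ` g ` I)"
    using assms by (intro continuous_at_Sup_mono monoI mult_left_mono) (auto intro: continuous_intros)
  then show ?thesis by (simp add: image_comp)
qed

lemma LB_bounded_weighted_unit_vecs:
  assumes m: "1 \<le> m"
  shows "LB_bounded \<sigma> (range (\<lambda>j i. complex_of_real (Lam_weight \<sigma> m j) * unit_vec j i))"
    (is "LB_bounded \<sigma> (range ?b)")
proof -
  have step: "?b j \<in> Lam_step \<sigma> m" for j by (intro Lam_step_scale unit_vec_Lam_step m)
  have "bdd_above (q ` range ?b)" if q: "LB_cont_seminorm \<sigma> q" for q
  proof -
    obtain C where C: "\<And>a. a \<in> Lam_step \<sigma> m \<Longrightarrow> q a \<le> C * Lam_norm \<sigma> m a"
      using q m unfolding LB_cont_seminorm_def by blast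
    have "q (?b j) \<le> \<bar>C\<bar>" for j
    proof -
      have "q (?b j) \<le> C * Lam_norm \<sigma> m (?b j)" by (rule C[OF step])
      also have "\<dots> \<le> \<bar>C\<bar> * Lam_norm \<sigma> m (?b j)"
        by (intro mult_right_mono Lam_norm_nonneg[OF step]) simp
      also have "\<dots> \<le> \<bar>C\<bar>" using mult_left_mono[OF Lam_norm_weighted_unit_vec[OF m]] by simp
      finally show ?thesis .
    qed
    then show ?thesis by (intro bdd_aboveI2) auto
  qed
  moreover have "range ?b \<subseteq> Lam \<sigma>"
  proof
    fix a assume "a \<in> range ?b"
    then obtain j where "a = ?b j" by blast
    then show "a \<in> Lam \<sigma>" using step[of j] m unfolding mem_Lam_iff by blast
  qed
  ultimately show ?thesis by (simp add: LB_bounded_def)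
qed

lemma dual_seminorm_upper:
  assumes B: "LB_bounded \<sigma> B" and T: "T \<in> LB_dual \<sigma>" and a: "a \<in> B"
  shows "cmod (T a) \<le> dual_seminorm B T"
proof -
  have "bdd_above ((\<lambda>a. cmod (T a)) ` B)"
    using B LB_dual_cont_seminorm[OF T] by (simp add: LB_bounded_def)
  then show ?thesis unfolding dual_seminorm_def using a by (intro cSup_upper) auto
qed

lemma dual_seminorm_le:
  "0 \<le> M \<Longrightarrow> (\<And>a. a \<in> B \<Longrightarrow> cmod (T a) \<le> M) \<Longrightarrow> dual_seminorm B T \<le> M"
  unfolding dual_seminorm_def by (rule cSup_least) auto

lemma LB_dual_coeff_le_dual_seminorm:
  assumes T: "T \<in> LB_dual \<sigma>" and m: "1 \<le> m"
  shows "cmod (T (unit_vec j)) * Lam_weight \<sigma> m j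
           \<le> dual_seminorm (range (\<lambda>j i. complex_of_real (Lam_weight \<sigma> m j) * unit_vec j i)) T"
    (is "_ \<le> dual_seminorm (range ?b) T")
proof -
  have "T (?b j) = complex_of_real (Lam_weight \<sigma> m j) * T (unit_vec j)"
    by (rule LB_dual_scale[OF T unit_vec_Lam])
  then have "cmod (T (unit_vec j)) * Lam_weight \<sigma> m j = cmod (T (?b j))"
    by (simp add: norm_mult Lam_weight_nonneg mult.commute)
  also have "\<dots> \<le> dual_seminorm (range ?b) T"
    by (rule dual_seminorm_upper[OF LB_bounded_weighted_unit_vecs[OF m] T rangeI])
  finally show ?thesis .
qed

lemma Phi_continuous:
  assumes pw: "pre_weight \<sigma>"
  shows "sn_continuous (LB_dual \<sigma>) {B. LB_bounded \<sigma> B} dual_seminorm {n. 1 \<le> n} (A0_seminorm \<sigma>) Phi"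
  unfolding sn_continuous_def
proof (intro ballI)
  fix n :: nat assume "n \<in> {n. 1 \<le> n}"
  then have n: "1 \<le> n" and n2: "1 \<le> 2 * n" by auto
  define B where "B = range (\<lambda>j i. complex_of_real (Lam_weight \<sigma> (2 * n) j) * unit_vec j i)"
  have "A0_seminorm \<sigma> n (Phi T) \<le> 2 / Sseq \<sigma> (real n) 0 * dual_seminorm B T"
    if T: "T \<in> LB_dual \<sigma>" for T
    using A0_seminorm_power_series_le[OF pw n LB_dual_coeff_le_dual_seminorm[OF T n2]]
    by (simp add: Phi_def B_def)
  moreover have "LB_bounded \<sigma> B" unfolding B_def by (rule LB_bounded_weighted_unit_vecs[OF n2])
  ultimately show "\<exists>F\<subseteq>{B. LB_bounded \<sigma> B}. finite F \<and>
      (\<exists>C. \<forall>T\<in>LB_dual \<sigma>. A0_seminorm \<sigma> n (Phi T) \<le> C * (\<Sum>B\<in>F. dual_seminorm B T))"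
    by (intro exI[of _ "{B}"] conjI exI[of _ "2 / Sseq \<sigma> (real n) 0"]) auto
qed

text \<open>If a bounded set B were not bounded in any single step, one could pick a_k in B and
  indices J k with step_ratio (k+1) a_k (J k) > k+1; the seminorm diag_seminorm J below is
  continuous but unbounded on B.\<close>

definition diag_seminorm :: "(real \<Rightarrow> real) \<Rightarrow> (nat \<Rightarrow> nat) \<Rightarrow> (nat \<Rightarrow> complex) \<Rightarrow> real" where
  "diag_seminorm \<sigma> J a = (SUP k. step_ratio \<sigma> (Suc k) a (J k))"

lemma step_ratio_add_le:
  "step_ratio \<sigma> k (\<lambda>i. a i + b i) j \<le> step_ratio \<sigma> k a j + step_ratio \<sigma> k b j"
  unfolding step_ratio_eq add_divide_distrib[symmetric]
  by (intro divide_right_mono norm_triangle_ineq Lam_weight_nonneg)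

lemma step_ratio_scale: "step_ratio \<sigma> k (\<lambda>i. c * a i) j = cmod c * step_ratio \<sigma> k a j"
  by (simp add: step_ratio_eq norm_mult)

lemma diag_seminorm_term_le:
  assumes pw: "pre_weight \<sigma>" and m: "1 \<le> m" and a: "a \<in> Lam_step \<sigma> m"
  shows "step_ratio \<sigma> (Suc k) a (J k)
           \<le> Lam_norm \<sigma> m a * (1 + (\<Sum>i<m. Lam_weight \<sigma> m (J i) / Lam_weight \<sigma> (Suc i) (J i)))"
proof -
  define R where "R i = Lam_weight \<sigma> m (J i) / Lam_weight \<sigma> (Suc i) (J i)" for i
  have R: "0 \<le> R i" for i by (simp add: R_def Lam_weight_nonneg)
  have "R k \<le> 1 + (\<Sum>i<m. R i)"
  proof (cases "m \<le> Suc k")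
    case True
    then have "R k \<le> 1"
      using Lam_weight_mono[OF pw m True] Lam_weight_pos[of "Suc k"] by (simp add: R_def)
    moreover have "0 \<le> (\<Sum>i<m. R i)" by (intro sum_nonneg R)
    ultimately show ?thesis by linarith
  next
    case False
    then have "R k \<le> (\<Sum>i<m. R i)" by (intro member_le_sum R) auto
    then show ?thesis by simp
  qed
  moreover have "step_ratio \<sigma> (Suc k) a (J k) \<le> Lam_norm \<sigma> m a * R k"
    using Lam_step_coord_le[OF m a, of "J k"] Lam_weight_pos[of "Suc k" \<sigma> "J k"]
    by (simp add: step_ratio_eq R_def divide_right_mono)
  ultimately show ?thesis
    unfolding R_def[symmetric] using Lam_norm_nonneg[OF a] by (meson mult_left_mono order_trans)
qed

lemma diag_seminorm_bdd:
  assumes pw: "pre_weight \<sigma>" and a: "a \<in> Lam \<sigma>"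
  shows "bdd_above (range (\<lambda>k. step_ratio \<sigma> (Suc k) a (J k)))"
proof -
  obtain m where m: "1 \<le> m" "a \<in> Lam_step \<sigma> m" using a by (auto simp: mem_Lam_iff)
  show ?thesis using diag_seminorm_term_le[OF pw m] by (intro bdd_aboveI2) blast
qed

lemma diag_seminorm_LB_cont_seminorm:
  assumes pw: "pre_weight \<sigma>"
  shows "LB_cont_seminorm \<sigma> (diag_seminorm \<sigma> J)"
  unfolding LB_cont_seminorm_def
proof (intro conjI ballI allI impI)
  fix a b assume a: "a \<in> Lam \<sigma>" and b: "b \<in> Lam \<sigma>"
  show "diag_seminorm \<sigma> J (\<lambda>i. a i + b i) \<le> diag_seminorm \<sigma> J a + diag_seminorm \<sigma> J b"
    unfolding diag_seminorm_def
    by (rule cSUP_least, simp, rule order_trans[OF step_ratio_add_le])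
      (intro add_mono cSUP_upper diag_seminorm_bdd[OF pw] a b UNIV_I)
next
  fix a c assume a: "a \<in> Lam \<sigma>"
  show "diag_seminorm \<sigma> J (\<lambda>i. c * a i) = cmod c * diag_seminorm \<sigma> J a"
    unfolding diag_seminorm_def step_ratio_scale
    by (intro cSUP_mult_left_real diag_seminorm_bdd[OF pw a]) auto
next
  fix k :: nat assume k: "1 \<le> k"
  show "\<exists>C. \<forall>a\<in>Lam_step \<sigma> k. diag_seminorm \<sigma> J a \<le> C * Lam_norm \<sigma> k a"
  proof (intro exI ballI)
    fix a assume a: "a \<in> Lam_step \<sigma> k"
    show "diag_seminorm \<sigma> J a
        \<le> (1 + (\<Sum>i<k. Lam_weight \<sigma> k (J i) / Lam_weight \<sigma> (Suc i) (J i))) * Lam_norm \<sigma> k a"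
      unfolding diag_seminorm_def using diag_seminorm_term_le[OF pw k a]
      by (intro cSUP_least) (auto simp: mult.commute)
  qed
qed

lemma LB_bounded_in_step:
  assumes pw: "pre_weight \<sigma>" and B: "LB_bounded \<sigma> B"
  shows "\<exists>k\<ge>1. \<forall>a\<in>B. \<forall>j. cmod (a j) \<le> real k * Lam_weight \<sigma> k j"
proof (rule ccontr)
  assume not_in_step: "\<not> ?thesis"
  have ex: "\<exists>a. a \<in> B \<and> (\<exists>j. real (Suc k) < step_ratio \<sigma> (Suc k) a j)" for k
  proof -
    have "\<not> (\<forall>a\<in>B. \<forall>j. cmod (a j) \<le> real (Suc k) * Lam_weight \<sigma> (Suc k) j)"
    proof
      assume "\<forall>a\<in>B. \<forall>j. cmod (a j) \<le> real (Suc k) * Lam_weight \<sigma> (Suc k) j"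
      then have "\<exists>k\<ge>1. \<forall>a\<in>B. \<forall>j. cmod (a j) \<le> real k * Lam_weight \<sigma> k j"
        by (intro exI[of _ "Suc k"]) simp
      with not_in_step show False by blast
    qed
    then obtain a j where a: "a \<in> B" and j: "real (Suc k) * Lam_weight \<sigma> (Suc k) j < cmod (a j)"
      by (meson not_le)
    have "real (Suc k) < step_ratio \<sigma> (Suc k) a j"
      using j pos_less_divide_eq[OF Lam_weight_pos[of "Suc k" \<sigma> j]] by (simp add: step_ratio_eq)
    with a show ?thesis by blast
  qed
  from choice[OF allI[OF ex]] obtain A
    where A: "\<forall>k. A k \<in> B \<and> (\<exists>j. real (Suc k) < step_ratio \<sigma> (Suc k) (A k) j)" ..
  then have "\<forall>k. \<exists>j. real (Suc k) < step_ratio \<sigma> (Suc k) (A k) j" by blast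
  from choice[OF this] obtain J where J: "\<forall>k. real (Suc k) < step_ratio \<sigma> (Suc k) (A k) (J k)" ..
  have "bdd_above (diag_seminorm \<sigma> J ` B)"
    using B diag_seminorm_LB_cont_seminorm[OF pw, of J] by (simp add: LB_bounded_def)
  then obtain U where U: "\<And>a. a \<in> B \<Longrightarrow> diag_seminorm \<sigma> J a \<le> U"
    by (auto simp: bdd_above_def)
  define k where "k = nat \<lceil>U\<rceil>"
  have Ak: "A k \<in> B" using A by blast
  have "real (Suc k) < step_ratio \<sigma> (Suc k) (A k) (J k)" using J by blast
  also have "\<dots> \<le> diag_seminorm \<sigma> J (A k)"
    unfolding diag_seminorm_def using Ak B
    by (intro cSUP_upper diag_seminorm_bdd[OF pw]) (auto simp: LB_bounded_def)
  also have "\<dots> \<le> real k" using U[OF Ak] unfolding k_def by linarith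
  finally show False by simp
qed

lemma inv_Phi_continuous:
  assumes pw: "pre_weight \<sigma>"
  shows "sn_continuous (A0 \<sigma>) {n. 1 \<le> n} (A0_seminorm \<sigma>)
           {B. LB_bounded \<sigma> B} dual_seminorm (inv_into (LB_dual \<sigma>) Phi)"
  unfolding sn_continuous_def
proof (intro ballI)
  fix B assume "B \<in> {B. LB_bounded \<sigma> B}"
  then have B: "LB_bounded \<sigma> B" by simp
  obtain k where k: "1 \<le> k" and a: "\<And>a j. a \<in> B \<Longrightarrow> cmod (a j) \<le> real k * Lam_weight \<sigma> k j"
    using LB_bounded_in_step[OF pw B] by blast
  define C where "C = 2 * real k * exp 1 * Sseq \<sigma> (real (2 * k)) 0"
  have "dual_seminorm B (inv_into (LB_dual \<sigma>) Phi f) \<le> C * A0_seminorm \<sigma> (2 * k) f"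
    if f: "f \<in> A0 \<sigma>" for f
  proof (unfold inv_into_Phi[OF pw f], rule dual_seminorm_le)
    have "0 \<le> A0_seminorm \<sigma> (2 * k) f" using A0_seminorm_nonneg[OF f] k by simp
    then show "0 \<le> C * A0_seminorm \<sigma> (2 * k) f" by (simp add: C_def less_imp_le)
    fix b assume "b \<in> B"
    then have "b \<in> Lam \<sigma>" using B by (auto simp: LB_bounded_def)
    then show "cmod (seq_functional \<sigma> (taylor_coeff f) b) \<le> C * A0_seminorm \<sigma> (2 * k) f"
      using Lam_pairing_bound(2)[OF pw k a[OF \<open>b \<in> B\<close>] taylor_coeff_A0_bound[OF pw f]] k
      by (simp add: seq_functional_def C_def mult_ac)
  qed
  then show "\<exists>F\<subseteq>{n. 1 \<le> n}. finite F \<and> (\<exists>C. \<forall>f\<in>A0 \<sigma>.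
      dual_seminorm B (inv_into (LB_dual \<sigma>) Phi f) \<le> C * (\<Sum>n\<in>F. A0_seminorm \<sigma> n f))"
    using k by (intro exI[of _ "{2 * k}"]) auto
qed

theorem lemmaA3:
  fixes \<sigma> :: "real \<Rightarrow> real"
  assumes "pre_weight \<sigma>"
  shows "bij_betw Phi (LB_dual \<sigma>) (A0 \<sigma>)
    \<and> (\<forall>T1\<in>LB_dual \<sigma>. \<forall>T2\<in>LB_dual \<sigma>. Phi (\<lambda>a. T1 a + T2 a) = (\<lambda>z. Phi T1 z + Phi T2 z))
    \<and> (\<forall>T\<in>LB_dual \<sigma>. \<forall>c. Phi (\<lambda>a. c * T a) = (\<lambda>z. c * Phi T z))
    \<and> sn_continuous (LB_dual \<sigma>) {B. LB_bounded \<sigma> B} dual_seminorm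
                     {n. n \<ge> 1} (A0_seminorm \<sigma>) Phi
    \<and> sn_continuous (A0 \<sigma>) {n. n \<ge> 1} (A0_seminorm \<sigma>)
                     {B. LB_bounded \<sigma> B} dual_seminorm (inv_into (LB_dual \<sigma>) Phi)"
  using Phi_bij[OF assms] Phi_add[OF assms] Phi_scale[OF assms]
    Phi_continuous[OF assms] inv_Phi_continuous[OF assms]
  by blast

end
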